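(* Let $p\ge1$, $\nu>p$, $\epsilon>0$, $\gamma>0$, let $B$ be a $p\times p$ symmetric positive definite matrix and $S$ a $p\times p$ symmetric positive semidefinite matrix. Let $M=\{X\in\mathbb{S}^p: X-\epsilon I\succeq0\}$ and let $N$ be as in the context. Define, for $X\in\mathbb{S}^p_{++}$ and $Y\in\mathbb{R}^{p\times p}$, $$P_\gamma(X,Y)=-(\nu-p)\log(\det X)+\mathrm{tr}((B^{-1}+S)X)+\frac{\gamma}{2}\|X-Y\|_F^2.$$ Then the problem $\min\{P_\gamma(X,Y):(X,Y)\in M\times N\}$ has a unique minimizer.
   Context: $\mathbb{S}^p$ ($\mathbb{S}^p_{++}$) is the set of $p\times p$ symmetric (symmetric positive definite) matrices; $\|\cdot\|_F$ is the Frobenius norm. Each node $i\in\{1,\dots,p\}$ has a type $s_i$ and a neighbor set $\mathcal{N}_i\subseteq\{1,\dots,p\}\setminus\{i\}$, and $N=\{X\in\mathbb{R}^{p\times p}:\ X_{ii}=X_{jj}\text{ whenever } s_i=s_j;\ X_{ij}=X_{kl}\text{ whenever } j\in\mathcal{N}_i,\ l\in\mathcal{N}_k,\ s_i=s_k,\ s_j=s_l;\ X_{ij}=0\text{ whenever } i\neq j \text{ and } j\notin\mathcal{N}_i\}$. *)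

theory Defs
  imports "HOL-Analysis.Analysis"
begin

text \<open>p x p real matrices are modelled as real^'n^'n with 'n a finite type, p = CARD('n).\<close>

definition sym_mat :: "real^'n^'n \<Rightarrow> bool" where
  "sym_mat A \<longleftrightarrow> transpose A = A"

definition psd_mat :: "real^'n^'n \<Rightarrow> bool" where
  "psd_mat A \<longleftrightarrow> sym_mat A \<and> (\<forall>x. 0 \<le> x \<bullet> (A *v x))"

definition pd_mat :: "real^'n^'n \<Rightarrow> bool" where
  "pd_mat A \<longleftrightarrow> sym_mat A \<and> (\<forall>x. x \<noteq> 0 \<longrightarrow> 0 < x \<bullet> (A *v x))"

definition frob_norm :: "real^'n^'n \<Rightarrow> real" where
  "frob_norm A = sqrt (\<Sum>i\<in>UNIV. \<Sum>j\<in>UNIV. (A $ i $ j)\<^sup>2)"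

definition M_set :: "real \<Rightarrow> (real^'n^'n) set" where
  "M_set eps = {X. sym_mat X \<and> psd_mat (X - eps *\<^sub>R mat 1)}"

text \<open>The structured set N given node types s and neighbour sets Nb.\<close>
definition N_set :: "('n \<Rightarrow> 't) \<Rightarrow> ('n \<Rightarrow> 'n set) \<Rightarrow> (real^'n^'n) set" where
  "N_set s Nb = {X.
      (\<forall>i j. s i = s j \<longrightarrow> X $ i $ i = X $ j $ j) \<and>
      (\<forall>i j k l. j \<in> Nb i \<and> l \<in> Nb k \<and> s i = s k \<and> s j = s l \<longrightarrow> (X $ i $ j) = (X $ k $ l)) \<and>
      (\<forall>i j. i \<noteq> j \<and> j \<notin> Nb i \<longrightarrow> X $ i $ j = 0)}"

definition P_gamma :: "real \<Rightarrow> real \<Rightarrow> real^'n^'n \<Rightarrow> real^'n^'n \<Rightarrow> real^'n^'n \<Rightarrow> real^'n^'n \<Rightarrow> real" where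
  "P_gamma nu gamma B S X Y =
     - (nu - real CARD('n)) * ln (det X) + trace ((matrix_inv B + S) ** X)
     + gamma / 2 * (frob_norm (X - Y))\<^sup>2"

end

theory Submission
  imports Defs
begin

text \<open>
  The objective is continuous on \<open>M \<times> N\<close> and coercive: for positive definite \<open>X\<close> and
  every \<open>b > 0\<close>, \<open>ln det X \<le> b tr X + const\<close> (sum \<open>ln y \<le> b y - ln b - 1\<close> over the
  eigenvalues), while \<open>tr ((B\<^sup>-\<^sup>1 + S) X) \<ge> a tr X\<close> for some \<open>a > 0\<close>, and \<open>tr X\<close> bounds
  the entries of \<open>X\<close>. So sublevel sets are bounded and a minimiser exists on the closed set
  \<open>M \<times> N\<close>. It is unique because the objective is strictly midpoint convex on the convex set
  \<open>M \<times> N\<close>: \<open>ln det\<close> is strictly concave (diagonalise both matrices simultaneously and apply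
  AM-GM to the eigenvalues), the trace term is linear and \<open>\<parallel>X - Y\<parallel>\<^sup>2\<close> is convex, strictly
  unless \<open>X - Y\<close> agrees at both points, in which case \<open>X\<close> does not and \<open>ln det\<close> gives
  strictness.
\<close>

section \<open>Spectral theorem for symmetric matrices\<close>

lemma sym_mat_inner_commute:
  fixes A :: "real^'n^'n"
  assumes "sym_mat A"
  shows "x \<bullet> (A *v y) = (A *v x) \<bullet> y"
proof -
  have "x \<bullet> (A *v y) = (x v* A) \<bullet> y"
    by (simp add: dot_lmul_matrix)
  also have "x v* A = transpose A *v x"
    by (simp add: transpose_matrix_vector)
  also have "transpose A = A"
    using assms by (simp add: sym_mat_def)
  finally show ?thesis .
qed

lemma linear_le_quadratic_imp_zero:
  fixes c K :: real
  assumes "\<And>t. 2 * t * c \<le> t\<^sup>2 * K"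
  shows "c = 0"
proof (rule ccontr)
  assume "c \<noteq> 0"
  define D where "D = \<bar>K\<bar> + 1"
  have "D > 0" "\<bar>K\<bar> < D"
    unfolding D_def by auto
  have "2 * (c / D) * c \<le> (c / D)\<^sup>2 * K"
    by (rule assms)
  also have "\<dots> \<le> (c / D)\<^sup>2 * \<bar>K\<bar>"
    by (simp add: mult_left_mono)
  also have "\<dots> < (c / D)\<^sup>2 * D"
    using \<open>c \<noteq> 0\<close> \<open>D > 0\<close> \<open>\<bar>K\<bar> < D\<close> by (intro mult_strict_left_mono) auto
  also have "\<dots> = (c / D) * c"
    using \<open>D > 0\<close> by (simp add: power2_eq_square)
  finally have "(c / D) * c < 0"
    by simp
  moreover have "0 < (c / D) * c"
    using \<open>c \<noteq> 0\<close> \<open>D > 0\<close> by (auto simp: zero_less_mult_iff zero_less_divide_iff linorder_neq_iff)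
  ultimately show False
    by simp
qed

lemma sym_mat_rayleigh_max_orthogonal:
  fixes A :: "real^'n^'n"
  assumes sym: "sym_mat A" and V: "subspace V" and "v \<in> V" "norm v = 1"
    and max: "\<And>y. y \<in> V \<Longrightarrow> norm y = 1 \<Longrightarrow> y \<bullet> (A *v y) \<le> v \<bullet> (A *v v)"
    and "w \<in> V" "w \<bullet> v = 0"
  shows "w \<bullet> (A *v v) = 0"
proof (rule linear_le_quadratic_imp_zero)
  \<comment> \<open>Compare the quotient at \<open>v + t w\<close> with its maximum \<open>m\<close> at \<open>v\<close>.\<close>
  fix t :: real
  define m where "m = v \<bullet> (A *v v)"
  define c where "c = w \<bullet> (A *v v)"
  define z where "z = v + t *\<^sub>R w"
  have "v \<bullet> v = 1"
    using \<open>norm v = 1\<close> by (simp add: dot_square_norm)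
  then have zz: "z \<bullet> z = 1 + t\<^sup>2 * (w \<bullet> w)"
    using \<open>w \<bullet> v = 0\<close> by (simp add: z_def inner_add_left inner_add_right inner_commute power2_eq_square)
  then have "z \<bullet> z > 0"
    by (smt (verit) inner_ge_zero mult_nonneg_nonneg zero_le_power2)
  have "z \<in> V"
    unfolding z_def using V \<open>v \<in> V\<close> \<open>w \<in> V\<close> by (intro subspace_add subspace_scale)
  then have "(1 / norm z) *\<^sub>R z \<in> V"
    by (rule subspace_scale[OF V])
  moreover have "norm ((1 / norm z) *\<^sub>R z) = 1"
    using \<open>z \<bullet> z > 0\<close> by simp
  ultimately have "((1 / norm z) *\<^sub>R z) \<bullet> (A *v ((1 / norm z) *\<^sub>R z)) \<le> m"
    using max m_def by blast
  then have "z \<bullet> (A *v z) \<le> m * (z \<bullet> z)"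
    using \<open>z \<bullet> z > 0\<close>
    by (simp add: matrix_vector_mult_scaleR dot_square_norm power2_eq_square divide_le_eq)
  moreover have "v \<bullet> (A *v w) = c"
    using sym_mat_inner_commute[OF sym, of v w] by (simp add: c_def inner_commute)
  then have "z \<bullet> (A *v z) = m + 2 * t * c + t\<^sup>2 * (w \<bullet> (A *v w))"
    by (simp add: z_def m_def c_def matrix_vector_right_distrib matrix_vector_mult_scaleR
        inner_add_left inner_add_right power2_eq_square algebra_simps)
  ultimately have "2 * t * c \<le> t\<^sup>2 * (m * (w \<bullet> w) - w \<bullet> (A *v w))"
    using zz by (simp add: algebra_simps)
  then show "2 * t * (w \<bullet> (A *v v)) \<le> t\<^sup>2 * (m * (w \<bullet> w) - w \<bullet> (A *v w))"
    by (simp only: c_def)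
qed

lemma sym_mat_invariant_subspace_eigenvector:
  fixes A :: "real^'n^'n"
  assumes sym: "sym_mat A" and V: "subspace V" "V \<noteq> {0}"
    and invariant: "\<And>x. x \<in> V \<Longrightarrow> A *v x \<in> V"
  obtains v l where "v \<in> V" "norm v = 1" "A *v v = l *\<^sub>R v"
proof -
  obtain x where "x \<in> V" "x \<noteq> 0"
    using V subspace_0 by blast
  then have "(1 / norm x) *\<^sub>R x \<in> V \<inter> sphere 0 1"
    using V by (simp add: subspace_scale)
  then have "V \<inter> sphere 0 1 \<noteq> {}"
    by blast
  moreover have "compact (V \<inter> sphere 0 1)"
    using V by (intro closed_Int_compact closed_subspace compact_sphere)
  moreover have "continuous_on (V \<inter> sphere 0 1) (\<lambda>y. y \<bullet> (A *v y))"
    by (intro continuous_intros)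
  ultimately obtain v where "v \<in> V \<inter> sphere 0 1"
    and "\<forall>y \<in> V \<inter> sphere 0 1. y \<bullet> (A *v y) \<le> v \<bullet> (A *v v)"
    using continuous_attains_sup by blast
  then have v: "v \<in> V" "norm v = 1"
    and max: "\<And>y. y \<in> V \<Longrightarrow> norm y = 1 \<Longrightarrow> y \<bullet> (A *v y) \<le> v \<bullet> (A *v v)"
    by auto
  define m where "m = v \<bullet> (A *v v)"
  define u where "u = A *v v - m *\<^sub>R v"
  have "v \<bullet> v = 1"
    using v by (simp add: dot_square_norm)
  have "u \<in> V"
    unfolding u_def using V v invariant by (intro subspace_diff subspace_scale) auto
  moreover have "u \<bullet> v = 0"
    using \<open>v \<bullet> v = 1\<close> by (simp add: u_def m_def inner_diff_left inner_diff_right inner_commute)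
  ultimately have "u \<bullet> (A *v v) = 0"
    using sym_mat_rayleigh_max_orthogonal[OF sym V(1) v max] by blast
  then have "u \<bullet> u = 0"
    using \<open>u \<bullet> v = 0\<close> by (simp add: u_def inner_diff_right)
  then have "A *v v = m *\<^sub>R v"
    by (simp add: u_def)
  then show ?thesis
    using that v by blast
qed

lemma sym_mat_orthogonal_eigenvector:
  fixes A :: "real^'n^'n"
  assumes "sym_mat A" "A *v e = l *\<^sub>R e" "orthogonal e x"
  shows "orthogonal e (A *v x)"
  using sym_mat_inner_commute[OF assms(1), of e x] assms(2,3) by (simp add: orthogonal_def)

lemma sym_mat_orthonormal_eigenvectors:
  fixes A :: "real^'n^'n"
  assumes sym: "sym_mat A" and "k \<le> CARD('n)"
  shows "\<exists>E. finite E \<and> card E = k \<and> pairwise orthogonal E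
           \<and> (\<forall>e\<in>E. norm e = 1 \<and> (\<exists>l. A *v e = l *\<^sub>R e))"
  using \<open>k \<le> CARD('n)\<close>
proof (induction k)
  case 0
  show ?case
    by (intro exI[of _ "{}"]) simp
next
  case (Suc k)
  then obtain E where E: "finite E" "card E = k" "pairwise orthogonal E"
    and eig: "\<forall>e\<in>E. norm e = 1 \<and> (\<exists>l. A *v e = l *\<^sub>R e)"
    by auto
  define V where "V = {x. \<forall>e\<in>E. orthogonal e x}"
  have "subspace V"
    unfolding V_def by (rule subspace_orthogonal_to_vectors)
  have "dim E < DIM(real^'n)"
    using dim_le_card'[OF E(1)] E(2) Suc.prems by simp
  then obtain x where "x \<noteq> 0" "\<And>y. y \<in> span E \<Longrightarrow> orthogonal x y"
    using orthogonal_to_subspace_exists by blast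
  then have "x \<in> V"
    unfolding V_def using span_base by (force simp: orthogonal_commute)
  then have "V \<noteq> {0}"
    using \<open>x \<noteq> 0\<close> by blast
  have invariant: "A *v x \<in> V" if "x \<in> V" for x
    using that eig sym_mat_orthogonal_eigenvector[OF sym] unfolding V_def by blast
  obtain v l where v: "v \<in> V" "norm v = 1" "A *v v = l *\<^sub>R v"
    by (rule sym_mat_invariant_subspace_eigenvector[OF sym \<open>subspace V\<close> \<open>V \<noteq> {0}\<close> invariant])
  have "v \<notin> E"
  proof
    assume "v \<in> E"
    then have "v \<bullet> v = 0"
      using v(1) by (simp add: V_def orthogonal_def)
    then show False
      using v(2) by simp
  qed
  then show ?case
    using E eig v
    by (intro exI[of _ "insert v E"])
      (auto simp: V_def pairwise_insert orthogonal_commute)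
qed

definition diag_mat :: "real^'n \<Rightarrow> real^'n^'n" where
  "diag_mat d = (\<chi> i j. if i = j then d $ i else 0)"

lemma matrix_mul_diag_mat_nth: "(M ** diag_mat d) $ i $ j = M $ i $ j * d $ j"
  by (simp add: matrix_matrix_mult_def diag_mat_def if_distrib sum.delta' cong: if_cong)

lemma transpose_diag_mat [simp]: "transpose (diag_mat d) = diag_mat d"
  by (simp add: vec_eq_iff transpose_def diag_mat_def)

lemma diag_mat_mul_diag_mat: "diag_mat a ** diag_mat b = diag_mat (\<chi> k. a $ k * b $ k)"
  by (simp add: vec_eq_iff matrix_mul_diag_mat_nth) (simp add: diag_mat_def)

lemma diag_mat_one: "diag_mat (\<chi> k. 1) = mat 1"
  by (simp add: vec_eq_iff diag_mat_def mat_def)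

lemma matrix_mul_eq_mul_diag_mat:
  fixes A Q :: "real^'n^'n"
  assumes "\<And>k. A *v column k Q = d $ k *\<^sub>R column k Q"
  shows "A ** Q = Q ** diag_mat d"
proof -
  have "(A ** Q) $ i $ j = (A *v column j Q) $ i" for i j
    by (simp add: matrix_matrix_mult_def matrix_vector_mult_def column_def)
  then show ?thesis
    using assms by (simp add: vec_eq_iff matrix_mul_diag_mat_nth column_def)
qed

lemma sym_mat_spectral:
  fixes A :: "real^'n^'n"
  assumes sym: "sym_mat A"
  obtains Q d where "orthogonal_matrix Q" "A = Q ** diag_mat d ** transpose Q"
    "\<And>k. A *v column k Q = d $ k *\<^sub>R column k Q"
proof -
  obtain E where E: "finite E" "card E = CARD('n)" "pairwise orthogonal E"
    and eig: "\<forall>e\<in>E. norm e = 1 \<and> (\<exists>l. A *v e = l *\<^sub>R e)"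
    using sym_mat_orthonormal_eigenvectors[OF sym order.refl] by blast
  obtain g where g: "bij_betw g (UNIV :: 'n set) E"
    using finite_same_card_bij[of "UNIV :: 'n set" E] E by auto
  define Q where "Q = (\<chi> i j. g j $ i)"
  have col: "column j Q = g j" for j
    by (simp add: Q_def column_def vec_eq_iff)
  have "g j \<in> E" for j
    using g by (auto simp: bij_betw_def)
  then have "\<forall>k. \<exists>l. A *v g k = l *\<^sub>R g k"
    using eig by blast
  then obtain l where l: "\<And>k. A *v g k = l k *\<^sub>R g k"
    by metis
  define d where "d = (\<chi> k. l k)"
  have ev: "A *v column k Q = d $ k *\<^sub>R column k Q" for k
    by (simp add: col d_def l)
  have "g i \<noteq> g j" if "i \<noteq> j" for i j
    using bij_betw_imp_inj_on[OF g] that by (auto dest: injD)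
  then have orth: "orthogonal_matrix Q"
    unfolding orthogonal_matrix_orthonormal_columns col
    using E(3) eig \<open>\<And>j. g j \<in> E\<close> by (simp add: pairwise_def)
  have "A ** Q = Q ** diag_mat d"
    using ev by (rule matrix_mul_eq_mul_diag_mat)
  then have "A = Q ** diag_mat d ** transpose Q"
    using orth by (metis matrix_mul_assoc matrix_mul_rid orthogonal_matrix_def)
  then show ?thesis
    using that orth ev by blast
qed

section \<open>Positive definite matrices\<close>

lemma congruence_diag_mat_nth:
  "(W ** diag_mat d ** transpose W) $ i $ j = (\<Sum>k\<in>UNIV. W $ i $ k * d $ k * W $ j $ k)"
  by (simp add: matrix_matrix_mult_def[of "W ** diag_mat d"] matrix_mul_diag_mat_nth transpose_def)

lemma det_congruence_diag_mat:
  "det (W ** diag_mat d ** transpose W) = (det W)\<^sup>2 * (\<Prod>k\<in>UNIV. d $ k)"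
proof -
  have "det (diag_mat d) = (\<Prod>k\<in>UNIV. d $ k)"
    by (subst det_diagonal) (auto simp: diag_mat_def)
  then show ?thesis
    by (simp add: det_mul det_transpose power2_eq_square)
qed

lemma det_orthogonal_congruence_diag_mat:
  assumes "orthogonal_matrix Q"
  shows "det (Q ** diag_mat d ** transpose Q) = (\<Prod>k\<in>UNIV. d $ k)"
  using det_orthogonal_matrix[OF assms] by (auto simp: det_congruence_diag_mat)

lemma trace_mul_congruence_diag_mat:
  fixes A Q :: "real^'n^'n"
  shows "trace (A ** (Q ** diag_mat d ** transpose Q)) = (\<Sum>k\<in>UNIV. d $ k * (column k Q \<bullet> (A *v column k Q)))"
proof -
  have "trace (A ** (Q ** diag_mat d ** transpose Q)) = trace (transpose Q ** (A ** Q ** diag_mat d))"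
    by (metis matrix_mul_assoc trace_mul_sym)
  also have "\<dots> = (\<Sum>k\<in>UNIV. d $ k * (column k Q \<bullet> (A *v column k Q)))"
    unfolding trace_def
  proof (rule sum.cong[OF refl])
    fix k
    have "(transpose Q ** M) $ k $ k = (\<Sum>i\<in>UNIV. Q $ i $ k * M $ i $ k)" for M :: "real^'n^'n"
      by (simp add: matrix_matrix_mult_def transpose_def)
    then have "(transpose Q ** (A ** Q ** diag_mat d)) $ k $ k = d $ k * (\<Sum>i\<in>UNIV. Q $ i $ k * (A ** Q) $ i $ k)"
      by (simp add: matrix_mul_diag_mat_nth sum_distrib_left algebra_simps)
    also have "(\<Sum>i\<in>UNIV. Q $ i $ k * (A ** Q) $ i $ k) = column k Q \<bullet> (A *v column k Q)"
      by (simp add: inner_vec_def column_def matrix_matrix_mult_def matrix_vector_mult_def)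
    finally show "(transpose Q ** (A ** Q ** diag_mat d)) $ k $ k = d $ k * (column k Q \<bullet> (A *v column k Q))" .
  qed
  finally show ?thesis .
qed

lemma trace_orthogonal_congruence_diag_mat:
  assumes "orthogonal_matrix Q"
  shows "trace (Q ** diag_mat d ** transpose Q) = (\<Sum>k\<in>UNIV. d $ k)"
proof -
  have "column k Q \<bullet> column k Q = 1" for k
    using assms by (simp add: orthogonal_matrix_orthonormal_columns dot_square_norm)
  then show ?thesis
    using trace_mul_congruence_diag_mat[of "mat 1" Q d] by simp
qed

lemma pd_mat_spectral:
  fixes A :: "real^'n^'n"
  assumes "pd_mat A"
  obtains Q d where "orthogonal_matrix Q" "A = Q ** diag_mat d ** transpose Q" "\<And>k. 0 < d $ k"
proof -
  obtain Q d where Q: "orthogonal_matrix Q" "A = Q ** diag_mat d ** transpose Q"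
    and ev: "\<And>k. A *v column k Q = d $ k *\<^sub>R column k Q"
    using sym_mat_spectral assms unfolding pd_mat_def by blast
  have "0 < d $ k" for k
  proof -
    have "column k Q \<bullet> column k Q = 1"
      using Q(1) by (simp add: orthogonal_matrix_orthonormal_columns dot_square_norm)
    moreover from this have "column k Q \<noteq> 0"
      by auto
    ultimately show ?thesis
      using assms ev[of k] unfolding pd_mat_def by (metis inner_scaleR_right mult.right_neutral)
  qed
  then show ?thesis
    using that Q by blast
qed

lemma pd_mat_det_pos:
  assumes "pd_mat A"
  shows "0 < det A"
proof -
  obtain Q d where "orthogonal_matrix Q" "A = Q ** diag_mat d ** transpose Q" "\<And>k. 0 < d $ k"
    using pd_mat_spectral[OF assms] by blast
  then show ?thesis
    by (simp add: det_orthogonal_congruence_diag_mat prod_pos)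
qed

lemma pd_mat_trace_mul_ge:
  fixes A X :: "real^'n^'n"
  assumes "pd_mat X" and A: "\<And>x. a * (x \<bullet> x) \<le> x \<bullet> (A *v x)"
  shows "a * trace X \<le> trace (A ** X)"
proof -
  obtain Q d where Q: "orthogonal_matrix Q" "X = Q ** diag_mat d ** transpose Q" and d: "\<And>k. 0 < d $ k"
    using pd_mat_spectral[OF assms(1)] by blast
  have "a \<le> column k Q \<bullet> (A *v column k Q)" for k
    using A[of "column k Q"] Q(1) by (simp add: orthogonal_matrix_orthonormal_columns dot_square_norm)
  then have "(\<Sum>k\<in>UNIV. d $ k * a) \<le> (\<Sum>k\<in>UNIV. d $ k * (column k Q \<bullet> (A *v column k Q)))"
    using d by (intro sum_mono mult_left_mono) (auto intro: less_imp_le)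
  then show ?thesis
    using Q by (simp add: trace_mul_congruence_diag_mat trace_orthogonal_congruence_diag_mat
        sum_distrib_left mult.commute)
qed

lemma pd_mat_ln_det_le_trace:
  fixes X :: "real^'n^'n"
  assumes "pd_mat X" and "0 < b"
  shows "ln (det X) \<le> b * trace X - CARD('n) * (ln b + 1)"
proof -
  obtain Q d where Q: "orthogonal_matrix Q" "X = Q ** diag_mat d ** transpose Q" and d: "\<And>k. 0 < d $ k"
    using pd_mat_spectral[OF assms(1)] by blast
  have "ln (d $ k) \<le> b * d $ k - (ln b + 1)" for k
    using ln_le_minus_one[of "b * d $ k"] d[of k] \<open>0 < b\<close> by (simp add: ln_mult)
  then have "(\<Sum>k\<in>UNIV. ln (d $ k)) \<le> (\<Sum>k\<in>UNIV. b * d $ k - (ln b + 1))"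
    by (rule sum_mono)
  moreover have "ln (det X) = (\<Sum>k\<in>UNIV. ln (d $ k))"
    using Q d by (simp add: det_orthogonal_congruence_diag_mat ln_prod less_imp_neq[symmetric])
  ultimately show ?thesis
    using Q by (simp add: trace_orthogonal_congruence_diag_mat sum_subtractf sum_distrib_left)
qed

lemma norm_matrix_le_sum_abs: "norm (X :: real^'n^'n) \<le> (\<Sum>i\<in>UNIV. \<Sum>j\<in>UNIV. \<bar>X $ i $ j\<bar>)"
proof -
  have "norm X \<le> (\<Sum>i\<in>UNIV. norm (X $ i))"
    unfolding norm_vec_def by (rule L2_set_le_sum) auto
  also have "\<dots> \<le> (\<Sum>i\<in>UNIV. \<Sum>j\<in>UNIV. \<bar>X $ i $ j\<bar>)"
    by (intro sum_mono norm_le_l1_cart)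
  finally show ?thesis .
qed

lemma pd_mat_abs_nth_le_trace:
  fixes X :: "real^'n^'n"
  assumes "pd_mat X"
  shows "\<bar>X $ i $ j\<bar> \<le> trace X"
proof -
  obtain Q d where Q: "orthogonal_matrix Q" "X = Q ** diag_mat d ** transpose Q" and d: "\<And>k. 0 < d $ k"
    using pd_mat_spectral[OF assms] by blast
  have Q_le_1: "\<bar>Q $ i $ k\<bar> \<le> 1" for i k
    using component_le_norm_cart[of "column k Q" i] Q(1)
    by (simp add: orthogonal_matrix_orthonormal_columns column_def)
  have "\<bar>X $ i $ j\<bar> = \<bar>\<Sum>k\<in>UNIV. Q $ i $ k * Q $ j $ k * d $ k\<bar>"
    using Q(2) by (simp add: congruence_diag_mat_nth mult.commute mult.left_commute)
  also have "\<dots> \<le> (\<Sum>k\<in>UNIV. \<bar>Q $ i $ k\<bar> * \<bar>Q $ j $ k\<bar> * d $ k)"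
    using d by (metis (no_types, lifting) abs_mult abs_of_pos sum_abs sum.cong)
  also have "\<dots> \<le> (\<Sum>k\<in>UNIV. d $ k)"
    using Q_le_1 d by (intro sum_mono) (simp add: mult_le_one less_imp_le mult_right_le_one_le)
  finally show ?thesis
    using Q by (simp add: trace_orthogonal_congruence_diag_mat)
qed

lemma pd_mat_norm_le_trace:
  fixes X :: "real^'n^'n"
  assumes "pd_mat X"
  shows "norm X \<le> CARD('n)\<^sup>2 * trace X"
proof -
  have "(\<Sum>i\<in>UNIV. \<Sum>j\<in>UNIV. \<bar>X $ i $ j\<bar>) \<le> (\<Sum>i\<in>(UNIV :: 'n set). \<Sum>j\<in>(UNIV :: 'n set). trace X)"
    using pd_mat_abs_nth_le_trace[OF assms] by (intro sum_mono)
  then show ?thesis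
    using norm_matrix_le_sum_abs[of X] by (simp add: power2_eq_square)
qed

lemma inner_congruence: "x \<bullet> ((transpose P ** A ** P) *v x) = (P *v x) \<bullet> (A *v (P *v x))"
  for P :: "real^'n^'m"
proof -
  have "x \<bullet> (transpose P *v y) = (P *v x) \<bullet> y" for y
    by (metis dot_lmul_matrix inner_commute transpose_matrix_vector)
  then show ?thesis
    by (simp add: matrix_vector_mul_assoc[symmetric])
qed

lemma pd_mat_congruence:
  fixes A P :: "real^'n^'n"
  assumes "pd_mat A" "invertible P"
  shows "pd_mat (transpose P ** A ** P)"
proof -
  have "transpose (transpose P ** A ** P) = transpose P ** A ** P"
    using assms(1) by (simp add: pd_mat_def sym_mat_def matrix_transpose_mul matrix_mul_assoc)
  moreover have "P *v x \<noteq> 0" if "x \<noteq> 0" for x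
    using inj_matrix_vector_mult[OF assms(2)] that by (metis injD matrix_vector_mult_0_right)
  ultimately show ?thesis
    using assms(1) by (simp add: pd_mat_def sym_mat_def inner_congruence)
qed

lemma quadratic_form_ge_norm:
  fixes A :: "real^'n^'n"
  assumes pos: "\<And>x. x \<noteq> 0 \<Longrightarrow> 0 < x \<bullet> (A *v x)"
  obtains a where "0 < a" "\<And>x. a * (x \<bullet> x) \<le> x \<bullet> (A *v x)"
proof -
  have "axis undefined 1 \<in> sphere (0 :: real^'n) 1"
    by simp
  then have "sphere (0 :: real^'n) 1 \<noteq> {}"
    by blast
  moreover have "continuous_on (sphere 0 1) (\<lambda>x. x \<bullet> (A *v x))"
    by (intro continuous_intros)
  ultimately obtain x0 where "x0 \<in> sphere 0 1" and min: "\<forall>y\<in>sphere 0 1. x0 \<bullet> (A *v x0) \<le> y \<bullet> (A *v y)"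
    using continuous_attains_inf[OF compact_sphere] by blast
  then have "x0 \<noteq> 0"
    by auto
  then have "0 < x0 \<bullet> (A *v x0)"
    by (rule pos)
  moreover have "x0 \<bullet> (A *v x0) * (x \<bullet> x) \<le> x \<bullet> (A *v x)" for x
  proof (cases "x = 0")
    case False
    define u where "u = (1 / norm x) *\<^sub>R x"
    have "u \<in> sphere 0 1"
      using False by (simp add: u_def)
    then have "(norm x)\<^sup>2 * (x0 \<bullet> (A *v x0)) \<le> (norm x)\<^sup>2 * (u \<bullet> (A *v u))"
      using min by (simp add: mult_left_mono)
    moreover have "x \<bullet> (A *v x) = (norm x)\<^sup>2 * (u \<bullet> (A *v u))" "x \<bullet> x = (norm x)\<^sup>2"
      using False by (simp_all add: u_def matrix_vector_mult_scaleR power2_eq_square dot_square_norm)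
    ultimately show ?thesis
      by (simp add: mult.commute)
  qed simp
  ultimately show ?thesis
    using that by blast
qed

lemma pd_mat_mul_matrix_inv:
  fixes B :: "real^'n^'n"
  assumes "pd_mat B"
  shows "B ** matrix_inv B = mat 1"
proof -
  have "x = 0" if "B *v x = 0" for x
    using assms that unfolding pd_mat_def by (metis inner_zero_right less_irrefl)
  then obtain B' where "B' ** B = mat 1"
    using matrix_left_invertible_ker by blast
  then have "\<exists>B'. B ** B' = mat 1 \<and> B' ** B = mat 1"
    using matrix_left_right_inverse by blast
  then show ?thesis
    unfolding matrix_inv_def by (rule someI_ex[THEN conjunct1])
qed

lemma pd_mat_inner_matrix_inv_pos:
  fixes B :: "real^'n^'n"
  assumes "pd_mat B" "x \<noteq> 0"
  shows "0 < x \<bullet> (matrix_inv B *v x)"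
proof -
  have Bx: "B *v (matrix_inv B *v x) = x"
    using pd_mat_mul_matrix_inv[OF assms(1)] by (simp add: matrix_vector_mul_assoc)
  then have "x \<bullet> (matrix_inv B *v x) = (matrix_inv B *v x) \<bullet> (B *v (matrix_inv B *v x))"
    by (simp add: inner_commute)
  moreover have "matrix_inv B *v x \<noteq> 0"
    using Bx assms(2) by auto
  ultimately show ?thesis
    using assms(1) by (simp add: pd_mat_def)
qed

section \<open>Strict concavity of the log-determinant\<close>

lemma pd_mat_factorization:
  fixes X :: "real^'n^'n"
  assumes "pd_mat X"
  obtains L Li :: "real^'n^'n" where "X = L ** transpose L" "Li ** L = mat 1"
proof -
  obtain Q l where Q: "orthogonal_matrix Q" and X: "X = Q ** diag_mat l ** transpose Q"
    and l: "\<And>k. 0 < l $ k"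
    using pd_mat_spectral[OF assms] by blast
  define L where "L = Q ** diag_mat (\<chi> k. sqrt (l $ k))"
  define Li where "Li = diag_mat (\<chi> k. 1 / sqrt (l $ k)) ** transpose Q"
  have "diag_mat (\<chi> k. sqrt (l $ k)) ** diag_mat (\<chi> k. sqrt (l $ k)) = diag_mat l"
    using l by (simp add: diag_mat_mul_diag_mat less_imp_le vec_lambda_eta)
  then have "X = Q ** (diag_mat (\<chi> k. sqrt (l $ k)) ** diag_mat (\<chi> k. sqrt (l $ k))) ** transpose Q"
    using X by simp
  also have "\<dots> = L ** transpose L"
    by (simp add: L_def matrix_transpose_mul matrix_mul_assoc)
  finally have "X = L ** transpose L" .
  have "Li ** L = diag_mat (\<chi> k. 1 / sqrt (l $ k)) ** (transpose Q ** Q) ** diag_mat (\<chi> k. sqrt (l $ k))"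
    by (simp add: Li_def L_def matrix_mul_assoc)
  also have "\<dots> = diag_mat (\<chi> k. 1 / sqrt (l $ k) * sqrt (l $ k))"
    using Q by (simp add: orthogonal_matrix_def diag_mat_mul_diag_mat)
  also have "\<dots> = mat 1"
    using l by (simp add: diag_mat_one[symmetric] less_imp_neq[symmetric])
  finally show ?thesis
    using that \<open>X = L ** transpose L\<close> by blast
qed

text \<open>With \<open>X\<^sub>1 = L L\<^sup>T\<close>, diagonalise \<open>L\<^sup>-\<^sup>1 X\<^sub>2 L\<^sup>-\<^sup>T = R M R\<^sup>T\<close> and take \<open>W = L R\<close>.\<close>
lemma pd_mat_simultaneous_diag:
  fixes X1 X2 :: "real^'n^'n"
  assumes "pd_mat X1" "pd_mat X2"
  obtains W :: "real^'n^'n" and \<mu> :: "real^'n"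
  where "X1 = W ** transpose W" "X2 = W ** diag_mat \<mu> ** transpose W" "\<And>k. 0 < \<mu> $ k"
proof -
  obtain L Li :: "real^'n^'n" where X1: "X1 = L ** transpose L" and LiL: "Li ** L = mat 1"
    using pd_mat_factorization[OF assms(1)] by blast
  then have LLi: "L ** Li = mat 1"
    using matrix_left_right_inverse by blast
  have "invertible (transpose Li)"
    using LiL LLi by (intro transpose_invertible) (auto simp: invertible_def)
  then have "pd_mat (Li ** X2 ** transpose Li)"
    using pd_mat_congruence[OF assms(2)] by (metis transpose_transpose)
  then obtain R \<mu> where R: "orthogonal_matrix R" and Z: "Li ** X2 ** transpose Li = R ** diag_mat \<mu> ** transpose R"
    and \<mu>: "\<And>k. 0 < \<mu> $ k"
    using pd_mat_spectral by blast
  have "X1 = L ** (R ** transpose R) ** transpose L"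
    using X1 R by (simp add: orthogonal_matrix_def)
  also have "\<dots> = (L ** R) ** transpose (L ** R)"
    by (simp add: matrix_transpose_mul matrix_mul_assoc)
  finally have X1_WW: "X1 = (L ** R) ** transpose (L ** R)" .
  have "X2 = (L ** Li) ** X2 ** transpose (L ** Li)"
    using LLi by (simp add: transpose_mat)
  also have "\<dots> = L ** (Li ** X2 ** transpose Li) ** transpose L"
    by (simp add: matrix_transpose_mul matrix_mul_assoc)
  also have "\<dots> = (L ** R) ** diag_mat \<mu> ** transpose (L ** R)"
    unfolding Z by (simp add: matrix_transpose_mul matrix_mul_assoc)
  finally show ?thesis
    using that[OF X1_WW] \<mu> by blast
qed

lemma half_ln_le_ln_mean_one:
  fixes m :: real
  assumes "0 < m"
  shows "ln m / 2 \<le> ln ((1 + m) / 2)"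
    and "m \<noteq> 1 \<Longrightarrow> ln m / 2 < ln ((1 + m) / 2)"
proof -
  have ln_sqrt_m: "ln m / 2 = ln (sqrt m)"
    using assms by (simp add: ln_sqrt)
  have mean: "(1 + m) / 2 - sqrt m = (sqrt m - 1)\<^sup>2 / 2"
    using assms by (simp add: power2_eq_square algebra_simps)
  then have "sqrt m \<le> (1 + m) / 2"
    by (metis diff_ge_0_iff_ge divide_nonneg_pos zero_le_power2 zero_less_numeral)
  then show "ln m / 2 \<le> ln ((1 + m) / 2)"
    using assms ln_sqrt_m by simp
  assume "m \<noteq> 1"
  then have "0 < (sqrt m - 1)\<^sup>2 / 2"
    using assms by simp
  then have "sqrt m < (1 + m) / 2"
    using mean by linarith
  then show "ln m / 2 < ln ((1 + m) / 2)"
    using assms ln_sqrt_m by simp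
qed

lemma ln_det_midpoint_gt:
  fixes X1 X2 :: "real^'n^'n"
  assumes "pd_mat X1" "pd_mat X2" "X1 \<noteq> X2"
  shows "(ln (det X1) + ln (det X2)) / 2 < ln (det (midpoint X1 X2))"
proof -
  obtain W :: "real^'n^'n" and \<mu> where X1: "X1 = W ** transpose W" and X2: "X2 = W ** diag_mat \<mu> ** transpose W"
    and \<mu>: "\<And>k. 0 < \<mu> $ k"
    using pd_mat_simultaneous_diag[OF assms(1,2)] by blast
  have X1': "X1 = W ** diag_mat (\<chi> k. 1) ** transpose W"
    using X1 by (simp add: diag_mat_one)
  have mid: "midpoint X1 X2 = W ** diag_mat (\<chi> k. (1 + \<mu> $ k) / 2) ** transpose W"
    unfolding X1' X2
    by (simp add: vec_eq_iff midpoint_def congruence_diag_mat_nth sum_divide_distrib[symmetric]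
        sum.distrib[symmetric] algebra_simps)
  define w where "w = (det W)\<^sup>2"
  have "0 < w"
    using pd_mat_det_pos[OF assms(1)] X1' by (simp add: w_def det_congruence_diag_mat)
  have "ln (det X1) = ln w"
    using X1' by (simp add: w_def det_congruence_diag_mat)
  moreover have "ln (det X2) = ln w + (\<Sum>k\<in>UNIV. ln (\<mu> $ k))"
    using X2 \<open>0 < w\<close> \<mu>
    by (simp add: w_def det_congruence_diag_mat ln_mult prod_pos ln_prod less_imp_neq[symmetric])
  moreover have "ln (det (midpoint X1 X2)) = ln w + (\<Sum>k\<in>UNIV. ln ((1 + \<mu> $ k) / 2))"
    using mid \<open>0 < w\<close> \<mu> by (simp add: w_def det_congruence_diag_mat ln_mult prod_pos ln_prod
        add_pos_pos less_imp_neq[symmetric])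
  moreover have "(\<Sum>k\<in>UNIV. ln (\<mu> $ k) / 2) < (\<Sum>k\<in>UNIV. ln ((1 + \<mu> $ k) / 2))"
  proof (rule sum_strict_mono_ex1)
    have "\<mu> \<noteq> (\<chi> k. 1)"
      using assms(3) X1' X2 by auto
    then show "\<exists>k\<in>UNIV. ln (\<mu> $ k) / 2 < ln ((1 + \<mu> $ k) / 2)"
      using half_ln_le_ln_mean_one(2)[OF \<mu>] by (auto simp: vec_eq_iff)
  qed (use half_ln_le_ln_mean_one(1)[OF \<mu>] in auto)
  ultimately show ?thesis
    by (simp add: sum_divide_distrib[symmetric])
qed

section \<open>The constraint sets\<close>

lemma M_set_iff:
  fixes X :: "real^'n^'n"
  shows "X \<in> M_set eps \<longleftrightarrow> transpose X = X \<and> (\<forall>x. eps * (x \<bullet> x) \<le> x \<bullet> (X *v x))"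
proof -
  have "transpose (X - eps *\<^sub>R mat 1) = transpose X - eps *\<^sub>R mat 1"
    by (simp add: transpose_def vec_eq_iff mat_def)
  moreover have "x \<bullet> ((X - eps *\<^sub>R mat 1) *v x) = x \<bullet> (X *v x) - eps * (x \<bullet> x)" for x
    by (simp add: matrix_vector_mult_diff_rdistrib scaleR_matrix_vector_assoc[symmetric] inner_diff_right)
  ultimately show ?thesis
    unfolding M_set_def psd_mat_def sym_mat_def by auto
qed

lemma M_set_pd_mat:
  assumes "0 < eps" "X \<in> M_set eps"
  shows "pd_mat X"
  using assms unfolding M_set_iff pd_mat_def sym_mat_def
  by (metis inner_gt_zero_iff mult_pos_pos order_less_le_trans)

lemma scaleR_mat_one_in_M_set: "eps *\<^sub>R mat 1 \<in> M_set eps"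
proof -
  have "transpose (eps *\<^sub>R mat 1) = (eps *\<^sub>R mat 1 :: real^'n^'n)"
    by (simp add: transpose_def vec_eq_iff mat_def)
  then show ?thesis
    by (simp add: M_set_iff scaleR_matrix_vector_assoc[symmetric])
qed

lemma closed_M_set: "closed (M_set eps :: (real^'n^'n) set)"
proof -
  have "M_set eps = {X::real^'n^'n. \<forall>i j. X $ j $ i = X $ i $ j} \<inter>
      (\<Inter>x. {X. eps * (x \<bullet> x) \<le> (\<Sum>i\<in>UNIV. x $ i * (\<Sum>j\<in>UNIV. X $ i $ j * x $ j))})"
    by (auto simp: M_set_iff vec_eq_iff transpose_def inner_vec_def matrix_vector_mult_def)
  also have "closed \<dots>"
    by (intro closed_Int closed_INT ballI closed_Collect_all closed_Collect_eq closed_Collect_le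
        continuous_intros)
  finally show ?thesis .
qed

lemma convex_M_set: "convex (M_set eps :: (real^'n^'n) set)"
proof (rule convexI)
  fix X Y :: "real^'n^'n" and u v :: real
  assume X: "X \<in> M_set eps" and Y: "Y \<in> M_set eps" and "0 \<le> u" "0 \<le> v" "u + v = 1"
  show "u *\<^sub>R X + v *\<^sub>R Y \<in> M_set eps"
    unfolding M_set_iff
  proof (intro conjI allI)
    show "transpose (u *\<^sub>R X + v *\<^sub>R Y) = u *\<^sub>R X + v *\<^sub>R Y"
      using X Y by (simp add: M_set_iff transpose_def vec_eq_iff)
  next
    fix x :: "real^'n"
    have "u * (eps * (x \<bullet> x)) \<le> u * (x \<bullet> (X *v x))" "v * (eps * (x \<bullet> x)) \<le> v * (x \<bullet> (Y *v x))"
      using X Y \<open>0 \<le> u\<close> \<open>0 \<le> v\<close> by (simp_all add: M_set_iff mult_left_mono)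
    moreover have "x \<bullet> ((u *\<^sub>R X + v *\<^sub>R Y) *v x) = u * (x \<bullet> (X *v x)) + v * (x \<bullet> (Y *v x))"
      by (simp add: matrix_vector_mult_add_rdistrib scaleR_matrix_vector_assoc[symmetric] inner_add_right)
    moreover have "eps * (x \<bullet> x) = u * (eps * (x \<bullet> x)) + v * (eps * (x \<bullet> x))"
      using \<open>u + v = 1\<close> by (metis distrib_right mult_1)
    ultimately show "eps * (x \<bullet> x) \<le> x \<bullet> ((u *\<^sub>R X + v *\<^sub>R Y) *v x)"
      by linarith
  qed
qed

lemma N_setD:
  assumes "X \<in> N_set s Nb"
  shows "s i = s j \<Longrightarrow> X $ i $ i = X $ j $ j"
    and "j \<in> Nb i \<Longrightarrow> l \<in> Nb k \<Longrightarrow> s i = s k \<Longrightarrow> s j = s l \<Longrightarrow> X $ i $ j = X $ k $ l"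
    and "i \<noteq> j \<Longrightarrow> j \<notin> Nb i \<Longrightarrow> X $ i $ j = 0"
proof -
  note N = assms[unfolded N_set_def mem_Collect_eq]
  show "s i = s j \<Longrightarrow> X $ i $ i = X $ j $ j"
    by (rule N[THEN conjunct1, rule_format])
  show "j \<in> Nb i \<Longrightarrow> l \<in> Nb k \<Longrightarrow> s i = s k \<Longrightarrow> s j = s l \<Longrightarrow> X $ i $ j = X $ k $ l"
    by (rule N[THEN conjunct2, THEN conjunct1, rule_format]) simp
  show "i \<noteq> j \<Longrightarrow> j \<notin> Nb i \<Longrightarrow> X $ i $ j = 0"
    by (rule N[THEN conjunct2, THEN conjunct2, rule_format]) simp
qed

lemma N_set_lincomb:
  assumes "X \<in> N_set s Nb" "Y \<in> N_set s Nb"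
  shows "a *\<^sub>R X + b *\<^sub>R Y \<in> N_set s Nb"
  unfolding N_set_def mem_Collect_eq
proof (intro conjI allI impI)
  fix i j
  assume "s i = s j"
  then have "X $ i $ i = X $ j $ j" "Y $ i $ i = Y $ j $ j"
    using N_setD(1)[OF assms(1)] N_setD(1)[OF assms(2)] by blast+
  then show "(a *\<^sub>R X + b *\<^sub>R Y) $ i $ i = (a *\<^sub>R X + b *\<^sub>R Y) $ j $ j"
    by simp
next
  fix i j k l
  assume "j \<in> Nb i \<and> l \<in> Nb k \<and> s i = s k \<and> s j = s l"
  then have "X $ i $ j = X $ k $ l" "Y $ i $ j = Y $ k $ l"
    using N_setD(2)[OF assms(1)] N_setD(2)[OF assms(2)] by blast+
  then show "(a *\<^sub>R X + b *\<^sub>R Y) $ i $ j = (a *\<^sub>R X + b *\<^sub>R Y) $ k $ l"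
    by simp
next
  fix i j
  assume "i \<noteq> j \<and> j \<notin> Nb i"
  then have "X $ i $ j = 0" "Y $ i $ j = 0"
    using N_setD(3)[OF assms(1)] N_setD(3)[OF assms(2)] by blast+
  then show "(a *\<^sub>R X + b *\<^sub>R Y) $ i $ j = 0"
    by simp
qed

lemma subspace_N_set: "subspace (N_set s Nb)"
  unfolding subspace_def
proof (intro conjI ballI allI)
  show "0 \<in> N_set s Nb"
    by (simp add: N_set_def)
next
  fix X Y
  assume "X \<in> N_set s Nb" "Y \<in> N_set s Nb"
  then show "X + Y \<in> N_set s Nb"
    using N_set_lincomb[of X s Nb Y 1 1] by simp
next
  fix c X
  assume "X \<in> N_set s Nb"
  then show "c *\<^sub>R X \<in> N_set s Nb"
    using N_set_lincomb[of X s Nb X c 0] by simp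
qed

section \<open>The objective\<close>

lemma frob_norm_eq_norm: "frob_norm X = norm X"
  by (simp add: frob_norm_def norm_vec_def L2_set_def sum_nonneg)

lemma continuous_on_P_gamma:
  "continuous_on {z. 0 < det (fst z)} (\<lambda>z. P_gamma nu gamma B S (fst z) (snd z))"
proof -
  have "continuous_on {z. 0 < det (fst z)} (\<lambda>z. det (fst z :: real^'n^'n))"
    unfolding det_def by (intro continuous_intros)
  then show ?thesis
    unfolding P_gamma_def frob_norm_eq_norm trace_def matrix_matrix_mult_def
    by (intro continuous_intros) auto
qed

lemma P_gamma_ge_trace:
  fixes X Y :: "real^'n^'n" and c :: real
  assumes "real CARD('n) < nu" "0 < a" "\<And>x. a * (x \<bullet> x) \<le> x \<bullet> ((matrix_inv B + S) *v x)"
    and "pd_mat X"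
  defines "c \<equiv> nu - real CARD('n)"
  shows "a / 2 * trace X + gamma / 2 * (norm (X - Y))\<^sup>2 + CARD('n) * c * (ln (a / (2 * c)) + 1)
      \<le> P_gamma nu gamma B S X Y"
proof -
  have "0 < c"
    using assms(1) by (simp add: c_def)
  have "c * ln (det X) \<le> c * (a / (2 * c) * trace X - CARD('n) * (ln (a / (2 * c)) + 1))"
    using pd_mat_ln_det_le_trace[OF assms(4), of "a / (2 * c)"] \<open>0 < c\<close> \<open>0 < a\<close> by simp
  also have "\<dots> = a / 2 * trace X - CARD('n) * c * (ln (a / (2 * c)) + 1)"
    using \<open>0 < c\<close> by (simp add: field_simps)
  finally have "c * ln (det X) \<le> a / 2 * trace X - CARD('n) * c * (ln (a / (2 * c)) + 1)" .
  moreover have "a * trace X \<le> trace ((matrix_inv B + S) ** X)"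
    by (rule pd_mat_trace_mul_ge[OF assms(4,3)])
  moreover have "P_gamma nu gamma B S X Y
      = - (c * ln (det X)) + trace ((matrix_inv B + S) ** X) + gamma / 2 * (norm (X - Y))\<^sup>2"
    by (simp add: P_gamma_def frob_norm_eq_norm c_def algebra_simps)
  ultimately show ?thesis
    by linarith
qed

lemma bounded_P_gamma_sublevel:
  fixes B S :: "real^'n^'n"
  assumes "real CARD('n) < nu" "0 < gamma" "pd_mat B" "psd_mat S"
  shows "bounded {z. pd_mat (fst z) \<and> P_gamma nu gamma B S (fst z) (snd z) \<le> r}"
proof -
  have "0 < x \<bullet> ((matrix_inv B + S) *v x)" if "x \<noteq> 0" for x
    using pd_mat_inner_matrix_inv_pos[OF assms(3) that] assms(4)
    by (simp add: psd_mat_def matrix_vector_mult_add_rdistrib inner_add_right add_pos_nonneg)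
  then obtain a where "0 < a" and a: "\<And>x. a * (x \<bullet> x) \<le> x \<bullet> ((matrix_inv B + S) *v x)"
    using quadratic_form_ge_norm by blast
  define c where "c = nu - real CARD('n)"
  define K where "K = r - CARD('n) * c * (ln (a / (2 * c)) + 1)"
  have "norm (X, Y) \<le> 2 * CARD('n)\<^sup>2 * (2 * K / a) + sqrt (2 * K / gamma)"
    if "pd_mat X" "P_gamma nu gamma B S X Y \<le> r" for X Y
  proof -
    have norm_X: "norm X \<le> CARD('n)\<^sup>2 * trace X"
      by (rule pd_mat_norm_le_trace[OF \<open>pd_mat X\<close>])
    then have "0 \<le> CARD('n)\<^sup>2 * trace X"
      using norm_ge_zero order_trans by blast
    then have "0 \<le> a / 2 * trace X"
      using \<open>0 < a\<close> by (simp add: zero_le_mult_iff)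
    moreover have "0 \<le> gamma / 2 * (norm (X - Y))\<^sup>2"
      using assms(2) by simp
    moreover have "a / 2 * trace X + gamma / 2 * (norm (X - Y))\<^sup>2 \<le> K"
      using P_gamma_ge_trace[OF assms(1) \<open>0 < a\<close> a \<open>pd_mat X\<close>, of gamma Y] that(2)
      by (simp add: K_def c_def)
    ultimately have "a / 2 * trace X \<le> K" "gamma / 2 * (norm (X - Y))\<^sup>2 \<le> K"
      by linarith+
    then have "trace X \<le> 2 * K / a" "(norm (X - Y))\<^sup>2 \<le> 2 * K / gamma"
      using \<open>0 < a\<close> assms(2) by (simp_all add: field_simps)
    then have "norm X \<le> CARD('n)\<^sup>2 * (2 * K / a)" "norm (X - Y) \<le> sqrt (2 * K / gamma)"
      using norm_X mult_left_mono[of "trace X" "2 * K / a" "CARD('n)\<^sup>2"] real_le_rsqrt by auto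
    moreover have "norm (X, Y) \<le> norm X + norm Y" "norm Y \<le> norm X + norm (X - Y)"
      using norm_Pair_le norm_triangle_ineq4[of X "X - Y"] by auto
    ultimately show ?thesis
      by linarith
  qed
  then show ?thesis
    unfolding bounded_iff by auto
qed

lemma norm_midpoint_power2:
  fixes u v :: "'a::real_inner"
  shows "(norm (midpoint u v))\<^sup>2 + (norm (u - v))\<^sup>2 / 4 = ((norm u)\<^sup>2 + (norm v)\<^sup>2) / 2"
proof -
  have "(norm (u + v))\<^sup>2 + (norm (u - v))\<^sup>2 = 2 * (norm u)\<^sup>2 + 2 * (norm v)\<^sup>2"
    by (simp add: power2_norm_eq_inner inner_add_left inner_add_right inner_diff_left
        inner_diff_right inner_commute)
  then show ?thesis
    by (simp add: midpoint_def power_divide)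
qed

lemma trace_midpoint: "trace (midpoint A B) = (trace A + trace (B :: real^'n^'n)) / 2"
  by (simp add: midpoint_def trace_def sum.distrib add_divide_distrib sum_divide_distrib)

lemma matrix_mul_midpoint: "(A :: real^'n^'n) ** midpoint X Y = midpoint (A ** X) (A ** Y)"
  by (simp add: midpoint_def matrix_add_ldistrib matrix_scalar_ac scalar_matrix_assoc scaleR_add_right)

lemma P_gamma_midpoint_lt:
  fixes X1 X2 Y1 Y2 :: "real^'n^'n"
  assumes "real CARD('n) < nu" "0 < gamma" "pd_mat X1" "pd_mat X2" "(X1, Y1) \<noteq> (X2, Y2)"
  shows "2 * P_gamma nu gamma B S (midpoint X1 X2) (midpoint Y1 Y2)
      < P_gamma nu gamma B S X1 Y1 + P_gamma nu gamma B S X2 Y2"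
proof -
  define c where "c = nu - real CARD('n)"
  define A where "A = matrix_inv B + S"
  define q where "q = (\<lambda>X Y :: real^'n^'n. gamma / 2 * (norm (X - Y))\<^sup>2)"
  have "0 < c"
    using assms(1) by (simp add: c_def)
  have P: "P_gamma nu gamma B S X Y = - (c * ln (det X)) + trace (A ** X) + q X Y" for X Y
    by (simp add: P_gamma_def frob_norm_eq_norm c_def A_def q_def algebra_simps)
  have trace_eq: "2 * trace (A ** midpoint X1 X2) = trace (A ** X1) + trace (A ** X2)"
    by (simp add: matrix_mul_midpoint trace_midpoint)
  have q_eq: "2 * q (midpoint X1 X2) (midpoint Y1 Y2) + gamma / 4 * (norm ((X1 - Y1) - (X2 - Y2)))\<^sup>2
      = q X1 Y1 + q X2 Y2"
  proof -
    have "midpoint X1 X2 - midpoint Y1 Y2 = midpoint (X1 - Y1) (X2 - Y2)"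
      by (simp add: midpoint_def algebra_simps)
    moreover have "gamma * ((norm (midpoint (X1 - Y1) (X2 - Y2)))\<^sup>2 + (norm ((X1 - Y1) - (X2 - Y2)))\<^sup>2 / 4)
        = gamma * (((norm (X1 - Y1))\<^sup>2 + (norm (X2 - Y2))\<^sup>2) / 2)"
      by (simp only: norm_midpoint_power2)
    ultimately show ?thesis
      unfolding q_def by (simp add: algebra_simps)
  qed
  have ln_lt: "c * ln (det X1) + c * ln (det X2) < 2 * (c * ln (det (midpoint X1 X2)))" if "X1 \<noteq> X2"
    using mult_strict_left_mono[OF ln_det_midpoint_gt[OF assms(3,4) that] \<open>0 < c\<close>]
    by (simp add: algebra_simps)
  show ?thesis
  proof (cases "X1 = X2")
    case True
    then have "0 < gamma / 4 * (norm ((X1 - Y1) - (X2 - Y2)))\<^sup>2"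
      using assms(2,5) by auto
    moreover have "c * ln (det (midpoint X1 X2)) = c * ln (det X1)" "c * ln (det X2) = c * ln (det X1)"
      using True by simp_all
    ultimately show ?thesis
      unfolding P using trace_eq q_eq by argo
  next
    case False
    have "0 \<le> gamma / 4 * (norm ((X1 - Y1) - (X2 - Y2)))\<^sup>2"
      using assms(2) by simp
    then show ?thesis
      unfolding P using trace_eq q_eq ln_lt[OF False] by argo
  qed
qed

section \<open>Existence and uniqueness of the minimiser\<close>

lemma continuous_attains_inf_sublevel:
  fixes F :: "'a::heine_borel \<Rightarrow> real"
  assumes "closed D" "z0 \<in> D" "continuous_on D F" "bounded {z \<in> D. F z \<le> F z0}"
  obtains z where "z \<in> D" "\<And>w. w \<in> D \<Longrightarrow> F z \<le> F w"
proof -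
  have "{z \<in> D. F z \<le> F z0} = D \<inter> F -` {..F z0}"
    by auto
  then have "compact {z \<in> D. F z \<le> F z0}"
    using assms by (simp add: compact_eq_bounded_closed continuous_closed_preimage)
  moreover have "{z \<in> D. F z \<le> F z0} \<noteq> {}"
    using assms(2) by blast
  moreover have "continuous_on {z \<in> D. F z \<le> F z0} F"
    using assms(3) by (rule continuous_on_subset) blast
  ultimately obtain z where z: "z \<in> D" "F z \<le> F z0" and min: "\<And>w. w \<in> D \<Longrightarrow> F w \<le> F z0 \<Longrightarrow> F z \<le> F w"
    using continuous_attains_inf by (metis (no_types, lifting) mem_Collect_eq)
  have "F z \<le> F w" if "w \<in> D" for w
    using min[OF that] z(2) by fastforce
  then show ?thesis
    using that z(1) by blast
qed

lemma ex1_minimizer_midpoint_strict: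
  fixes F :: "'a::{real_normed_vector, heine_borel} \<Rightarrow> real"
  assumes "closed D" "convex D" "z0 \<in> D" "continuous_on D F" "bounded {z \<in> D. F z \<le> F z0}"
    and strict: "\<And>z1 z2. z1 \<in> D \<Longrightarrow> z2 \<in> D \<Longrightarrow> z1 \<noteq> z2 \<Longrightarrow> 2 * F (midpoint z1 z2) < F z1 + F z2"
  shows "\<exists>!z. z \<in> D \<and> (\<forall>w\<in>D. F z \<le> F w)"
proof (rule ex_ex1I)
  obtain z where "z \<in> D" "\<And>w. w \<in> D \<Longrightarrow> F z \<le> F w"
    using continuous_attains_inf_sublevel[OF assms(1,3,4,5)] by blast
  then show "\<exists>z. z \<in> D \<and> (\<forall>w\<in>D. F z \<le> F w)"
    by blast
next
  fix z1 z2
  assume z1: "z1 \<in> D \<and> (\<forall>w\<in>D. F z1 \<le> F w)" and z2: "z2 \<in> D \<and> (\<forall>w\<in>D. F z2 \<le> F w)"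
  have "midpoint z1 z2 \<in> D"
    using z1 z2 closed_segment_subset[OF _ _ assms(2)] midpoint_in_closed_segment by blast
  then have "F z1 \<le> F (midpoint z1 z2)" "F z2 \<le> F (midpoint z1 z2)"
    using z1 z2 by blast+
  then show "z1 = z2"
    using strict z1 z2 by fastforce
qed

theorem theorem2:
  fixes nu eps gamma :: real
    and B S :: "real^'n^'n"
    and s :: "'n \<Rightarrow> 't" and Nb :: "'n \<Rightarrow> 'n set"
  assumes "nu > real CARD('n)" and "eps > 0" and "gamma > 0"
    and "pd_mat B" and "psd_mat S"
    and "\<forall>i. i \<notin> Nb i"
  shows "\<exists>!XY. XY \<in> M_set eps \<times> N_set s Nb \<and>
           (\<forall>XY' \<in> M_set eps \<times> N_set s Nb.
              P_gamma nu gamma B S (fst XY) (snd XY) \<le> P_gamma nu gamma B S (fst XY') (snd XY'))"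
proof -
  \<comment> \<open>\<open>N\<close> is a linear subspace for any neighbour sets.\<close>
  let ?D = "M_set eps \<times> N_set s Nb :: ((real^'n^'n) \<times> (real^'n^'n)) set"
  let ?F = "\<lambda>z. P_gamma nu gamma B S (fst z) (snd z)"
  have pd: "pd_mat X" if "X \<in> M_set eps" for X :: "real^'n^'n"
    using M_set_pd_mat[OF \<open>eps > 0\<close> that] .
  show ?thesis
  proof (rule ex1_minimizer_midpoint_strict[where F = ?F])
    show "closed ?D"
      by (intro closed_Times closed_M_set closed_subspace subspace_N_set)
    show "convex ?D"
      by (intro convex_Times convex_M_set subspace_imp_convex subspace_N_set)
    show "(eps *\<^sub>R mat 1, 0) \<in> ?D"
      using scaleR_mat_one_in_M_set subspace_0[OF subspace_N_set] by blast
    have "?D \<subseteq> {z. 0 < det (fst z)}"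
    proof
      fix z
      assume "z \<in> ?D"
      then have "fst z \<in> M_set eps"
        by (simp add: mem_Times_iff)
      then show "z \<in> {z. 0 < det (fst z)}"
        using pd_mat_det_pos[OF pd] by simp
    qed
    with continuous_on_P_gamma show "continuous_on ?D ?F"
      by (rule continuous_on_subset)
    show "bounded {z \<in> ?D. ?F z \<le> ?F (eps *\<^sub>R mat 1, 0)}"
      using bounded_P_gamma_sublevel[OF assms(1,3,4,5)] by (rule bounded_subset) (auto dest: pd)
    fix z1 z2
    assume "z1 \<in> ?D" "z2 \<in> ?D" "z1 \<noteq> z2"
    then show "2 * ?F (midpoint z1 z2) < ?F z1 + ?F z2"
      using P_gamma_midpoint_lt[OF assms(1,3) pd pd] by (cases z1, cases z2) (simp add: midpoint_def)
  qed
qed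

end
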